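(* The finite derivative test $\mathcal D$ is reasonable.
   Context: Let $\Omega=\{0,1\}$, $\Omega^\infty$ the set of infinite sequences $\omega=(\omega_1,\omega_2,\dots)$, and $\omega^t=(\omega_1,\dots,\omega_t)$ (also used for the cylinder set of all sequences with this prefix; $\omega^0=\emptyset$). $\mathcal G_t$ is the $\sigma$-algebra generated by the length-$t$ cylinders and $\mathcal G_\infty$ the $\sigma$-algebra generated by all cylinders. $\Delta(\Omega)$ is the set of probability distributions on $\Omega$; for $p\in\Delta(\Omega)$ and $x\in\Omega$, $p[x]$ is the probability of $x$. A forecasting strategy is a map $f:\bigcup_{t\ge0}(\Omega\times\Delta(\Omega)\times\Delta(\Omega))^t\to\Delta(\Omega)$; $F$ is the set of all forecasting strategies. Given an ordered pair $\vec f=(f,g)\in F\times F$ and $\omega\in\Omega^\infty$, the play path $(\omega,\vec f)$ is defined recursively: $(\omega,\vec f)^0=\emptyset$ and its $t$-th entry is $(\omega_t,f((\omega,\vec f)^{t-1}),g((\omega,\vec f)^{t-1}))$, where $(\omega,\vec f)^t$ is the prefix of length $t$. The pair $\vec f$ induces two probability measures on $(\Omega^\infty,\mathcal G_\infty)$, again denoted $f$ and $g$ (they depend on the pair), determined by $f(\omega^t)=\prod_{n=1}^t f((\omega,\vec f)^{n-1})[\omega_n]$ and $g(\omega^t)=\prod_{n=1}^t g((\omega,\vec f)^{n-1})[\omega_n]$. A (cardinal comparison) test is a sequence $T=(T_t)_{t>0}$ of $\mathcal G_t$-measurable functions $T_t:(\Omega\times\Delta(\Omega)\times\Delta(\Omega))^\infty\to[0,1]$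 (depending only on the first $t$ entries); write $T_t(\omega,\vec f)=T_t((\omega,\vec f))$ and $T(\omega,\vec f)=\lim_t T_t(\omega,\vec f)$ whenever the limit exists. For $\epsilon\in(0,1)$ let $L^{\vec f}_{T,\epsilon}=\{\omega:T(\omega,\vec f)\text{ exists and }>\epsilon\}$ and $R^{\vec f}_{T,\epsilon}=\{\omega:T(\omega,\vec f)\text{ exists and }<\epsilon\}$. $T$ is reasonable if for all $\vec f=(f,g)\in F\times F$ and every measurable $A\subseteq\Omega^\infty$: for $\epsilon\in(0,\frac12)$, if $g(A)>0$ and $f(A)<\frac{\epsilon}{1-\epsilon}g(A)$ then $g(A\cap R^{\vec f}_{T,\epsilon})>0$; and for $\epsilon\in(\frac12,1)$, if $f(A)>0$ and $g(A)<\frac{1-\epsilon}{\epsilon}f(A)$ then $f(A\cap L^{\vec f}_{T,\epsilon})>0$ (with $f,g$ the measures induced by $\vec f$). The finite derivative test $\mathcal D$ is defined for $t\ge0$ by $\mathcal D_{t+1}(\omega,\vec f)=\frac{f(\omega^t)}{f(\omega^t)+g(\omega^t)}$ if $f(\omega^t)>0$ or $g(\omega^t)>0$, and $\frac12$ otherwise. *)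

theory Defs
  imports "HOL-Probability.Probability"
begin

text \<open>Outcomes Omega = {0,1} are rendered as bool (True = 1); Delta(Omega) as bool pmf.
  An entry of a play path is (omega_t, forecast of f, forecast of g).
  Infinite sequences are functions nat => bool, omega_1 being omega 0.\<close>

type_synonym entry = "bool \<times> bool pmf \<times> bool pmf"
type_synonym strat = "entry list \<Rightarrow> bool pmf"

text \<open>play w f g t = the length-t prefix (w, (f,g))^t of the play path.\<close>
fun play :: "(nat \<Rightarrow> bool) \<Rightarrow> strat \<Rightarrow> strat \<Rightarrow> nat \<Rightarrow> entry list" where
  "play w f g 0 = []"
| "play w f g (Suc n) = play w f g n @ [(w n, f (play w f g n), g (play w f g n))]"

definition cyl :: "(nat \<Rightarrow> bool) \<Rightarrow> nat \<Rightarrow> (nat \<Rightarrow> bool) set" where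
  "cyl w t = {v. \<forall>i<t. v i = w i}"

definition Ginf :: "(nat \<Rightarrow> bool) set set" where
  "Ginf = sigma_sets UNIV {cyl w t | w t. True}"

definition induced :: "(nat \<Rightarrow> bool) measure \<Rightarrow> strat \<Rightarrow> strat \<Rightarrow> strat \<Rightarrow> bool" where
  "induced M f g sel \<longleftrightarrow> prob_space M \<and> space M = UNIV \<and> sets M = Ginf \<and>
     (\<forall>w t. measure M (cyl w t) = (\<Prod>n<t. pmf (sel (play w f g n)) (w n)))"

text \<open>A test: T t h is T_t evaluated on a play path whose length-t prefix is h
  (so T_t depends only on the first t entries).\<close>
type_synonym test = "nat \<Rightarrow> entry list \<Rightarrow> real"

definition Lset :: "test \<Rightarrow> strat \<Rightarrow> strat \<Rightarrow> real \<Rightarrow> (nat \<Rightarrow> bool) set" where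
  "Lset T f g e = {w. \<exists>l. (\<lambda>t. T t (play w f g t)) \<longlonglongrightarrow> l \<and> l > e}"

definition Rset :: "test \<Rightarrow> strat \<Rightarrow> strat \<Rightarrow> real \<Rightarrow> (nat \<Rightarrow> bool) set" where
  "Rset T f g e = {w. \<exists>l. (\<lambda>t. T t (play w f g t)) \<longlonglongrightarrow> l \<and> l < e}"

definition reasonable :: "test \<Rightarrow> bool" where
  "reasonable T \<longleftrightarrow>
    (\<forall>f g Mf Mg. induced Mf f g f \<and> induced Mg f g g \<longrightarrow>
      (\<forall>A \<in> Ginf.
        (\<forall>e. 0 < e \<and> e < 1/2 \<and> measure Mg A > 0 \<and> measure Mf A < e / (1 - e) * measure Mg A
              \<longrightarrow> measure Mg (A \<inter> Rset T f g e) > 0) \<and>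
        (\<forall>e. 1/2 < e \<and> e < 1 \<and> measure Mf A > 0 \<and> measure Mg A < (1 - e) / e * measure Mf A
              \<longrightarrow> measure Mf (A \<inter> Lset T f g e) > 0)))"

text \<open>Finite derivative test: D_{t+1} uses the first t entries; f(w^t), g(w^t) are read off
  from the forecasts recorded in the path. D_0 is irrelevant (set to 1/2).\<close>
definition fdt :: test where
  "fdt t h = (case t of 0 \<Rightarrow> 1/2 | Suc s \<Rightarrow>
     (let a = (\<Prod>n<s. pmf (fst (snd (h ! n))) (fst (h ! n)));
          b = (\<Prod>n<s. pmf (snd (snd (h ! n))) (fst (h ! n)))
      in if a > 0 \<or> b > 0 then a / (a + b) else 1/2))"

end

theory Submission
  imports Defs
begin

text \<open>Write \<open>D\<^sub>t(w) = f(w\<^sup>t) / (f(w\<^sup>t) + g(w\<^sup>t))\<close>. Under \<open>g\<close>, \<open>D\<^sub>t\<close> converges almost surely: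
  stopping at the successive times where the likelihood ratio \<open>f/g\<close> drops below \<open>a\<close> and then
  rises above \<open>b > a\<close>, every such upcrossing costs a factor \<open>a/b\<close> of \<open>g\<close>-probability, so almost no
  path oscillates. Now let \<open>f(A) < c g(A)\<close> with \<open>c = \<epsilon>/(1-\<epsilon>)\<close>. If \<open>lim D \<ge> \<epsilon>\<close> held \<open>g\<close>-almost
  everywhere on \<open>A\<close>, then for some \<open>c' < c\<close> with \<open>f(A) < c' g(A)\<close> almost every path of \<open>A\<close> would
  eventually satisfy \<open>f(w\<^sup>t) \<ge> c' g(w\<^sup>t)\<close>; summing over cylinders, after approximating \<open>A\<close> by finitely
  determined events, gives \<open>f(A) \<ge> c' g(A)\<close>, a contradiction. The second clause of reasonableness
  is the first one with \<open>f\<close> and \<open>g\<close> exchanged, since this turns \<open>D\<close> into \<open>1 - D\<close>.\<close>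

section \<open>Approximation by a generating algebra\<close>

lemma (in finite_measure) measure_le_sym_diff:
  assumes "A \<in> sets M" "B \<in> sets M"
  shows "measure M A \<le> measure M B + measure M (sym_diff A B)"
proof -
  have "measure M A \<le> measure M (B \<union> sym_diff A B)"
    using assms by (intro finite_measure_mono) auto
  also have "\<dots> \<le> measure M B + measure M (sym_diff A B)"
    using assms by (intro measure_Un_le) auto
  finally show ?thesis .
qed

lemma (in finite_measure) eventually_measure_UN_Diff_less:
  fixes A :: "nat \<Rightarrow> 'a set"
  assumes A: "range A \<subseteq> sets M" and e: "0 < e"
  shows "eventually (\<lambda>n. measure M ((\<Union>i. A i) - (\<Union>i<n. A i)) < e) sequentially"
proof -
  have U: "(\<Union>i<n. A i) \<in> sets M" for n
    using A by auto
  have "incseq (\<lambda>n. \<Union>i<n. A i)"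
    by (force simp: incseq_def)
  then have "(\<lambda>n. measure M (\<Union>i<n. A i)) \<longlonglongrightarrow> measure M (\<Union>n. \<Union>i<n. A i)"
    using U by (intro finite_Lim_measure_incseq) auto
  moreover have "(\<Union>n. \<Union>i<n. A i) = (\<Union>i. A i)"
    by blast
  ultimately have "(\<lambda>n. measure M (\<Union>i. A i) - measure M (\<Union>i<n. A i)) \<longlonglongrightarrow> 0"
    using tendsto_diff[OF tendsto_const[of "measure M (\<Union>i. A i)"]] by fastforce
  then have "eventually (\<lambda>n. measure M (\<Union>i. A i) - measure M (\<Union>i<n. A i) < e) sequentially"
    using e by (rule order_tendstoD(2))
  moreover have "measure M ((\<Union>i. A i) - (\<Union>i<n. A i)) = measure M (\<Union>i. A i) - measure M (\<Union>i<n. A i)" for n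
    using A U by (intro finite_measure_Diff) auto
  ultimately show ?thesis
    by simp
qed

lemma (in finite_measure) measure_sym_diff_UN_le:
  fixes A F :: "nat \<Rightarrow> 'a set"
  assumes A: "range A \<subseteq> sets M" and F: "\<And>i. i < n \<Longrightarrow> F i \<in> sets M"
  shows "measure M (sym_diff (\<Union>i. A i) (\<Union>i<n. F i))
    \<le> measure M ((\<Union>i. A i) - (\<Union>i<n. A i)) + (\<Sum>i<n. measure M (sym_diff (A i) (F i)))"
proof -
  have "(\<Union>i. A i) \<in> sets M" "(\<Union>i<n. A i) \<in> sets M"
    using sets.countable_UN[OF A] A by auto
  then have tail: "(\<Union>i. A i) - (\<Union>i<n. A i) \<in> sets M" by auto
  have errs: "(\<Union>i<n. sym_diff (A i) (F i)) \<in> sets M"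
    using A F by auto
  have "measure M (sym_diff (\<Union>i. A i) (\<Union>i<n. F i))
      \<le> measure M (((\<Union>i. A i) - (\<Union>i<n. A i)) \<union> (\<Union>i<n. sym_diff (A i) (F i)))"
    using tail errs by (intro finite_measure_mono) auto
  also have "\<dots> \<le> measure M ((\<Union>i. A i) - (\<Union>i<n. A i)) + measure M (\<Union>i<n. sym_diff (A i) (F i))"
    using tail errs by (rule measure_Un_le)
  also have "measure M (\<Union>i<n. sym_diff (A i) (F i)) \<le> (\<Sum>i<n. measure M (sym_diff (A i) (F i)))"
    using A F by (intro finite_measure_subadditive_finite) auto
  finally show ?thesis
    by simp
qed

definition approximable :: "'a measure \<Rightarrow> 'a measure \<Rightarrow> 'a set set \<Rightarrow> 'a set \<Rightarrow> bool" where
  "approximable M N G A \<longleftrightarrow>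
    (\<forall>e>0. \<exists>E\<in>G. measure M (sym_diff A E) < e \<and> measure N (sym_diff A E) < e)"

lemma approximable_UN:
  fixes A :: "nat \<Rightarrow> 'a set"
  assumes G: "algebra \<Omega> G"
    and M: "finite_measure M" "sets M = sigma_sets \<Omega> G"
    and N: "finite_measure N" "sets N = sigma_sets \<Omega> G"
    and A: "range A \<subseteq> sigma_sets \<Omega> G" "\<And>i. approximable M N G (A i)"
  shows "approximable M N G (\<Union>i. A i)"
  unfolding approximable_def
proof (intro allI impI)
  interpret algebra \<Omega> G by (fact G)
  interpret M: finite_measure M by (fact M(1))
  interpret N: finite_measure N by (fact N(1))
  fix e :: real
  assume "0 < e"
  have "eventually (\<lambda>n. measure M ((\<Union>i. A i) - (\<Union>i<n. A i)) < e/2 \<and>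
      measure N ((\<Union>i. A i) - (\<Union>i<n. A i)) < e/2) sequentially"
    using \<open>0 < e\<close> A(1) M(2) N(2)
    by (intro eventually_conj M.eventually_measure_UN_Diff_less N.eventually_measure_UN_Diff_less) auto
  then obtain n where
      tailM: "measure M ((\<Union>i. A i) - (\<Union>i<n. A i)) < e/2" and
      tailN: "measure N ((\<Union>i. A i) - (\<Union>i<n. A i)) < e/2"
    by (auto simp: eventually_sequentially)
  define \<delta> where "\<delta> = e / (2 * (real n + 1))"
  have "0 < \<delta>" and n\<delta>: "real n * \<delta> < e / 2"
    using \<open>0 < e\<close> by (auto simp: \<delta>_def field_simps)
  have "\<forall>i. \<exists>E. E \<in> G \<and> measure M (sym_diff (A i) E) < \<delta> \<and> measure N (sym_diff (A i) E) < \<delta>"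
    using A(2) \<open>0 < \<delta>\<close> unfolding approximable_def by blast
  then obtain F where F: "\<And>i. F i \<in> G"
      and FM: "\<And>i. measure M (sym_diff (A i) (F i)) < \<delta>"
      and FN: "\<And>i. measure N (sym_diff (A i) (F i)) < \<delta>"
    by (metis (no_types, lifting) choice)
  have "measure K (sym_diff (\<Union>i. A i) (\<Union>i<n. F i)) < e"
    if K: "finite_measure K" "sets K = sigma_sets \<Omega> G"
      and tail: "measure K ((\<Union>i. A i) - (\<Union>i<n. A i)) < e/2"
      and err: "\<And>i. measure K (sym_diff (A i) (F i)) < \<delta>" for K
  proof -
    have "(\<Sum>i<n. measure K (sym_diff (A i) (F i))) \<le> (\<Sum>i<n. \<delta>)"
      using err by (intro sum_mono less_imp_le)
    moreover have "range A \<subseteq> sets K" "F i \<in> sets K" for i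
      using F K(2) A(1) by auto
    ultimately show ?thesis
      using finite_measure.measure_sym_diff_UN_le[OF K(1), of A n F] tail n\<delta> by force
  qed
  then show "\<exists>E\<in>G. measure M (sym_diff (\<Union>i. A i) E) < e \<and> measure N (sym_diff (\<Union>i. A i) E) < e"
    using F FM FN M N tailM tailN by (intro bexI[of _ "\<Union>i<n. F i"]) auto
qed

lemma approximable_sigma_sets:
  assumes G: "algebra \<Omega> G"
    and M: "finite_measure M" "sets M = sigma_sets \<Omega> G"
    and N: "finite_measure N" "sets N = sigma_sets \<Omega> G"
    and A: "A \<in> sigma_sets \<Omega> G"
  shows "approximable M N G A"
proof -
  interpret algebra \<Omega> G by (fact G)
  show ?thesis
    using Int_stable space_closed A
  proof (induction rule: sigma_sets_induct_disjoint)
    case (basic A)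
    then show ?case
      by (force simp: approximable_def)
  next
    case empty
    then show ?case
      by (force simp: approximable_def)
  next
    case (compl A)
    moreover have "sym_diff (\<Omega> - A) (\<Omega> - E) = sym_diff A E" if "E \<in> G" for E
      using that space_closed compl.hyps sigma_sets_into_sp[OF space_closed] by blast
    ultimately show ?case
      unfolding approximable_def by (metis compl_sets)
  next
    case (union A)
    then show ?case
      using approximable_UN[OF G M N] by blast
  qed
qed

section \<open>Oscillation of bounded sequences\<close>

definition share :: "real \<Rightarrow> real \<Rightarrow> real" where
  "share p q = (if 0 < p \<or> 0 < q then p / (p + q) else 1/2)"

lemma share_nonneg: "0 \<le> p \<Longrightarrow> 0 \<le> q \<Longrightarrow> 0 \<le> share p q"
  by (simp add: share_def)

lemma share_le_one: "0 \<le> p \<Longrightarrow> 0 \<le> q \<Longrightarrow> share p q \<le> 1"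
  by (auto simp: share_def divide_simps)

lemma share_swap: "0 \<le> p \<Longrightarrow> 0 \<le> q \<Longrightarrow> share q p = 1 - share p q"
  by (auto simp: share_def divide_simps)

lemma le_mult_if_share_le:
  assumes "0 \<le> p" "0 \<le> q" "0 \<le> c" "share p q \<le> c / (1 + c)"
  shows "p \<le> c * q"
proof (cases "0 < p \<or> 0 < q")
  case True
  then have "p / (p + q) \<le> c / (1 + c)" "0 < p + q"
    using assms by (auto simp: share_def)
  then have "p * (1 + c) \<le> c * (p + q)"
    using assms(3) by (simp add: divide_simps)
  then show ?thesis
    by (simp add: algebra_simps)
qed (use assms in auto)

lemma mult_le_if_le_share:
  assumes "0 \<le> p" "0 \<le> q" "0 \<le> c" "c / (1 + c) \<le> share p q"
  shows "c * q \<le> p"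
proof (cases "0 < p \<or> 0 < q")
  case True
  then have "c / (1 + c) \<le> p / (p + q)" "0 < p + q"
    using assms by (auto simp: share_def)
  then have "c * (p + q) \<le> p * (1 + c)"
    using assms(3) by (simp add: divide_simps)
  then show ?thesis
    by (simp add: algebra_simps)
qed (use assms in auto)

definition oscillates :: "(nat \<Rightarrow> real) \<Rightarrow> real \<Rightarrow> real \<Rightarrow> bool" where
  "oscillates X \<alpha> \<beta> \<longleftrightarrow>
    frequently (\<lambda>t. X t \<le> \<alpha>) sequentially \<and> frequently (\<lambda>t. \<beta> \<le> X t) sequentially"

text \<open>Otherwise \<open>liminf\<close> and \<open>limsup\<close> are separated by a pair of rationals.\<close>
lemma convergent_if_not_oscillating:
  fixes X :: "nat \<Rightarrow> real"
  assumes bounds: "\<And>t. 0 \<le> X t" "\<And>t. X t \<le> 1"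
    and no_osc: "\<And>\<alpha> \<beta>. \<alpha> \<in> \<rat> \<Longrightarrow> \<beta> \<in> \<rat> \<Longrightarrow> 0 < \<alpha> \<Longrightarrow> \<alpha> < \<beta> \<Longrightarrow> \<beta> < 1 \<Longrightarrow>
      \<not> oscillates X \<alpha> \<beta>"
  shows "convergent X"
proof -
  let ?L = "liminf (\<lambda>t. ereal (X t))" and ?U = "limsup (\<lambda>t. ereal (X t))"
  have LU: "0 \<le> ?L" "?L \<le> ?U" "?U \<le> 1"
    using bounds by (auto intro: Liminf_bounded Limsup_bounded Liminf_le_Limsup)
  then obtain l where l: "?L = ereal l"
    by (cases ?L) auto
  obtain u where u: "?U = ereal u"
    using LU by (cases ?U) auto
  have "0 \<le> l" "l \<le> u" "u \<le> 1"
    using LU l u by auto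
  show ?thesis
  proof (cases "l = u")
    case True
    then have "(\<lambda>t. ereal (X t)) \<longlonglongrightarrow> ereal l"
      using l u by (subst tendsto_iff_Liminf_eq_Limsup) auto
    then have "X \<longlonglongrightarrow> l"
      by simp
    then show ?thesis
      by (auto simp: convergent_def)
  next
    case False
    then obtain \<alpha> \<beta> where "\<alpha> \<in> \<rat>" "\<beta> \<in> \<rat>" "l < \<alpha>" "\<alpha> < \<beta>" "\<beta> < u"
      using \<open>l \<le> u\<close> Rats_dense_in_real by (metis order_less_le)
    moreover have "frequently (\<lambda>t. X t \<le> \<alpha>) sequentially"
    proof (rule ccontr)
      assume "\<not> frequently (\<lambda>t. X t \<le> \<alpha>) sequentially"
      then have "eventually (\<lambda>t. ereal \<alpha> \<le> ereal (X t)) sequentially"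
        by (auto simp: not_frequently elim: eventually_mono)
      then have "ereal \<alpha> \<le> ?L"
        by (rule Liminf_bounded)
      then show False
        using \<open>l < \<alpha>\<close> l by simp
    qed
    moreover have "frequently (\<lambda>t. \<beta> \<le> X t) sequentially"
    proof (rule ccontr)
      assume "\<not> frequently (\<lambda>t. \<beta> \<le> X t) sequentially"
      then have "eventually (\<lambda>t. ereal (X t) \<le> ereal \<beta>) sequentially"
        by (auto simp: not_frequently elim: eventually_mono)
      then have "?U \<le> ereal \<beta>"
        by (rule Limsup_bounded)
      then show False
        using \<open>\<beta> < u\<close> u by simp
    qed
    ultimately show ?thesis
      using no_osc \<open>0 \<le> l\<close> \<open>u \<le> 1\<close> unfolding oscillates_def by (meson le_less_trans less_le_trans)
  qed
qed

section \<open>Cylinders and finitely determined events\<close>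

lemma cyl_cong: "(\<And>i. i < t \<Longrightarrow> v i = w i) \<Longrightarrow> cyl v t = cyl w t"
  by (auto simp: cyl_def)

lemma cyl_eq_or_disjoint: "cyl v t = cyl w t \<or> cyl v t \<inter> cyl w t = {}"
  by (auto simp: cyl_def)

lemma cyl_in_Ginf [simp]: "cyl w t \<in> Ginf"
  unfolding Ginf_def by (rule sigma_sets.Basic) blast

interpretation Ginf: sigma_algebra UNIV Ginf
  unfolding Ginf_def by (rule sigma_algebra_sigma_sets) auto

definition determined :: "nat \<Rightarrow> (nat \<Rightarrow> bool) set \<Rightarrow> bool" where
  "determined t E \<longleftrightarrow> (\<forall>v w. (\<forall>i<t. v i = w i) \<longrightarrow> v \<in> E \<longrightarrow> w \<in> E)"

lemma determined_Collect:
  "(\<And>v w. (\<And>i. i < t \<Longrightarrow> v i = w i) \<Longrightarrow> P v \<longleftrightarrow> P w) \<Longrightarrow> determined t {w. P w}"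
  unfolding determined_def by blast

lemma determined_cyl: "determined t (cyl w t)"
  by (auto simp: determined_def cyl_def)

lemma determined_mono: "determined t E \<Longrightarrow> t \<le> s \<Longrightarrow> determined s E"
  unfolding determined_def using less_le_trans by blast

lemma determined_Int: "determined t E \<Longrightarrow> determined t F \<Longrightarrow> determined t (E \<inter> F)"
  unfolding determined_def by blast

lemma determined_Un: "determined t E \<Longrightarrow> determined t F \<Longrightarrow> determined t (E \<union> F)"
  unfolding determined_def by blast

lemma determined_Compl:
  assumes "determined t E"
  shows "determined t (UNIV - E)"
  unfolding determined_def
proof (intro allI impI)
  fix v w assume "\<forall>i<t. v i = w i" "v \<in> UNIV - E"
  moreover have "\<forall>i<t. w i = v i"
    using calculation(1) by simp
  ultimately show "w \<in> UNIV - E"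
    using assms unfolding determined_def by blast
qed

lemma determined_eq_UN_cyl: "determined t E \<Longrightarrow> E = (\<Union>w\<in>E. cyl w t)"
  unfolding determined_def cyl_def by blast

lemma finite_image_cyl: "finite ((\<lambda>w. cyl w t) ` E)"
proof (rule finite_subset)
  show "(\<lambda>w. cyl w t) ` E \<subseteq> (\<lambda>S. cyl (\<lambda>i. i \<in> S) t) ` Pow {..<t}"
  proof
    fix C assume "C \<in> (\<lambda>w. cyl w t) ` E"
    then obtain w where "C = cyl w t" by auto
    also have "\<dots> = cyl (\<lambda>i. i \<in> {i. i < t \<and> w i}) t"
      by (rule cyl_cong) auto
    finally show "C \<in> (\<lambda>S. cyl (\<lambda>i. i \<in> S) t) ` Pow {..<t}"
      by blast
  qed
qed simp

lemma determined_in_Ginf: "determined t E \<Longrightarrow> E \<in> Ginf"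
  by (subst determined_eq_UN_cyl) (auto intro: Ginf.finite_Union finite_image_cyl)

lemma algebra_determined: "algebra UNIV {E. \<exists>t. determined t E}"
  unfolding algebra_iff_Un
proof (intro conjI ballI)
  show "{} \<in> {E. \<exists>t. determined t E}"
    by (auto simp: determined_def)
  fix E F assume "E \<in> {E. \<exists>t. determined t E}" "F \<in> {E. \<exists>t. determined t E}"
  then obtain t s where "determined t E" "determined s F"
    by blast
  then have "determined (t + s) E" "determined (t + s) F"
    by (auto elim: determined_mono)
  then show "UNIV - E \<in> {E. \<exists>t. determined t E}" "E \<union> F \<in> {E. \<exists>t. determined t E}"
    using \<open>determined t E\<close> by (blast intro: determined_Compl determined_Un)+
qed simp

lemma Ginf_eq_sigma_determined: "Ginf = sigma_sets UNIV {E. \<exists>t. determined t E}"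
proof
  show "Ginf \<subseteq> sigma_sets UNIV {E. \<exists>t. determined t E}"
    unfolding Ginf_def by (rule sigma_sets_mono) (auto intro: determined_cyl)
  show "sigma_sets UNIV {E. \<exists>t. determined t E} \<subseteq> Ginf"
    by (rule Ginf.sigma_sets_subset) (auto intro: determined_in_Ginf)
qed

locale cylinder_measure_pair =
  M: finite_measure M + N: finite_measure N for M N :: "(nat \<Rightarrow> bool) measure" +
  assumes sets_M: "sets M = Ginf" and sets_N: "sets N = Ginf"
begin

lemma space_N [simp]: "space N = UNIV"
  using sets.sets_into_space[of UNIV N] by (auto simp: sets_N)

lemma approx_by_determined:
  assumes "A \<in> Ginf" "0 < e"
  obtains t E where "determined t E" "measure M (sym_diff A E) < e" "measure N (sym_diff A E) < e"
proof -
  have "A \<in> sigma_sets UNIV {E. \<exists>t. determined t E}"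
    using assms(1) Ginf_eq_sigma_determined by simp
  then have "approximable M N {E. \<exists>t. determined t E} A"
    using sets_M sets_N Ginf_eq_sigma_determined
    by (intro approximable_sigma_sets[OF algebra_determined M.finite_measure_axioms _
        N.finite_measure_axioms]) auto
  then show thesis
    using that assms(2) unfolding approximable_def by blast
qed

lemma measure_le_determined:
  assumes E: "determined t E"
    and cyl_le: "\<And>w. w \<in> E \<Longrightarrow> \<beta> * measure N (cyl w t) \<le> \<alpha> * measure M (cyl w t)"
  shows "\<beta> * measure N E \<le> \<alpha> * measure M E"
proof -
  let ?C = "(\<lambda>w. cyl w t) ` E"
  have "measure K E = (\<Sum>C\<in>?C. measure K C)" if "finite_measure K" "sets K = Ginf" for K
  proof -
    have "disjoint_family_on (\<lambda>C. C) ?C"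
      unfolding disjoint_family_on_def using cyl_eq_or_disjoint by auto
    then have "measure K (\<Union>C\<in>?C. C) = (\<Sum>C\<in>?C. measure K C)"
      using that finite_image_cyl by (intro finite_measure.finite_measure_finite_Union) auto
    then show ?thesis
      using determined_eq_UN_cyl[OF E] by simp
  qed
  then have "\<beta> * measure N E = (\<Sum>C\<in>?C. \<beta> * measure N C)" "\<alpha> * measure M E = (\<Sum>C\<in>?C. \<alpha> * measure M C)"
    using sets_M sets_N M.finite_measure_axioms N.finite_measure_axioms
    by (simp_all add: sum_distrib_left)
  moreover have "(\<Sum>C\<in>?C. \<beta> * measure N C) \<le> (\<Sum>C\<in>?C. \<alpha> * measure M C)"
    using cyl_le by (intro sum_mono) auto
  ultimately show ?thesis
    by simp
qed

lemma measure_le_stopped: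
  assumes E: "\<And>t. determined t (E t)" "disjoint_family E"
    and cyl_le: "\<And>t w. w \<in> E t \<Longrightarrow> \<beta> * measure N (cyl w t) \<le> \<alpha> * measure M (cyl w t)"
  shows "\<beta> * measure N (\<Union>t. E t) \<le> \<alpha> * measure M (\<Union>t. E t)"
proof (rule sums_le)
  have "range E \<subseteq> Ginf"
    using E determined_in_Ginf by auto
  then show "(\<lambda>t. \<beta> * measure N (E t)) sums (\<beta> * measure N (\<Union>t. E t))"
    "(\<lambda>t. \<alpha> * measure M (E t)) sums (\<alpha> * measure M (\<Union>t. E t))"
    using M.finite_measure_UNION N.finite_measure_UNION E(2) sets_M sets_N by (auto intro!: sums_mult)
  show "\<beta> * measure N (E t) \<le> \<alpha> * measure M (E t)" for t
    using measure_le_determined[OF E(1) cyl_le] .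
qed

end

section \<open>Crossings of the likelihood ratio\<close>

text \<open>An even count waits for \<open>X \<le> a Y\<close>, an odd count for \<open>b Y \<le> X\<close>; so two increments make one
  upcrossing of \<open>X/Y\<close> from below \<open>a\<close> to above \<open>b\<close>.\<close>

fun crossings :: "real \<Rightarrow> real \<Rightarrow> (nat \<Rightarrow> real) \<Rightarrow> (nat \<Rightarrow> real) \<Rightarrow> nat \<Rightarrow> nat" where
  "crossings a b X Y 0 = 0"
| "crossings a b X Y (Suc t) = crossings a b X Y t +
     (if even (crossings a b X Y t) \<and> X t \<le> a * Y t \<or> odd (crossings a b X Y t) \<and> b * Y t \<le> X t
      then 1 else 0)"

lemma crossings_mono: "s \<le> t \<Longrightarrow> crossings a b X Y s \<le> crossings a b X Y t"
  by (rule lift_Suc_mono_le[of "crossings a b X Y"]) auto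

lemma crossings_cong:
  "(\<And>i. i < t \<Longrightarrow> X i = X' i \<and> Y i = Y' i) \<Longrightarrow> crossings a b X Y t = crossings a b X' Y' t"
  by (induction t) auto

lemma crossings_first_reach:
  assumes "0 < j" "j \<le> crossings a b X Y t"
  shows "\<exists>s. crossings a b X Y s < j \<and> j \<le> crossings a b X Y (Suc s)"
  using assms(2)
proof (induction t)
  case (Suc t)
  then show ?case
    by (cases "j \<le> crossings a b X Y t") (auto intro: exI[of _ t])
qed (use assms(1) in simp)

lemma crossings_unbounded:
  assumes low: "frequently (\<lambda>t. X t \<le> a * Y t) sequentially"
    and high: "frequently (\<lambda>t. b * Y t \<le> X t) sequentially"
  shows "\<exists>t. j \<le> crossings a b X Y t"
proof (induction j)
  case (Suc j)
  then obtain t0 where t0: "j \<le> crossings a b X Y t0"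
    by blast
  show ?case
  proof (cases "Suc j \<le> crossings a b X Y t0")
    case False
    obtain t where t: "t0 \<le> t" "even j \<and> X t \<le> a * Y t \<or> odd j \<and> b * Y t \<le> X t"
      using low high unfolding frequently_sequentially by (cases "even j") blast+
    have "j \<le> crossings a b X Y t"
      using t0 crossings_mono[OF t(1)] by (rule order_trans)
    then have "crossings a b X Y t = j \<or> Suc j \<le> crossings a b X Y t"
      by linarith
    then have "Suc j \<le> crossings a b X Y (Suc t) \<or> Suc j \<le> crossings a b X Y t"
      using t(2) by auto
    then show ?thesis
      by blast
  qed blast
qed simp

definition crossing_count ::
    "(nat \<Rightarrow> bool) measure \<Rightarrow> (nat \<Rightarrow> bool) measure \<Rightarrow> real \<Rightarrow> real \<Rightarrow> (nat \<Rightarrow> bool) \<Rightarrow> nat \<Rightarrow> nat"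
  where
  "crossing_count M N a b w = crossings a b (\<lambda>t. measure M (cyl w t)) (\<lambda>t. measure N (cyl w t))"

lemma crossing_count_cong:
  assumes "\<And>i. i < t \<Longrightarrow> v i = w i" "s \<le> Suc t"
  shows "crossing_count M N a b v s = crossing_count M N a b w s"
proof -
  have "cyl v i = cyl w i" if "i < s" for i
    using assms that by (intro cyl_cong) simp
  then show ?thesis
    unfolding crossing_count_def by (intro crossings_cong) simp
qed

definition crossed_set ::
    "(nat \<Rightarrow> bool) measure \<Rightarrow> (nat \<Rightarrow> bool) measure \<Rightarrow> real \<Rightarrow> real \<Rightarrow> nat \<Rightarrow> (nat \<Rightarrow> bool) set"
  where
  "crossed_set M N a b j = {w. \<exists>t. j \<le> crossing_count M N a b w t}"

definition first_crossing_set ::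
    "(nat \<Rightarrow> bool) measure \<Rightarrow> (nat \<Rightarrow> bool) measure \<Rightarrow> real \<Rightarrow> real \<Rightarrow> nat \<Rightarrow> nat \<Rightarrow> (nat \<Rightarrow> bool) set"
  where
  "first_crossing_set M N a b j t = {w. crossing_count M N a b w t < j \<and> j \<le> crossing_count M N a b w (Suc t)}"

lemma determined_first_crossing_set: "determined t (first_crossing_set M N a b j t)"
  unfolding first_crossing_set_def
proof (rule determined_Collect)
  fix v w :: "nat \<Rightarrow> bool"
  assume "\<And>i. i < t \<Longrightarrow> v i = w i"
  then have "crossing_count M N a b v s = crossing_count M N a b w s" if "s \<le> Suc t" for s
    using that by (rule crossing_count_cong)
  then show "crossing_count M N a b v t < j \<and> j \<le> crossing_count M N a b v (Suc t) \<longleftrightarrow>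
      crossing_count M N a b w t < j \<and> j \<le> crossing_count M N a b w (Suc t)"
    by simp
qed

lemma disjoint_family_first_crossing_set: "disjoint_family (first_crossing_set M N a b j)"
  unfolding disjoint_family_on_def
proof (intro ballI impI)
  have *: "w \<notin> first_crossing_set M N a b j m \<inter> first_crossing_set M N a b j n" if "m < n" for w m n
  proof -
    have "crossing_count M N a b w (Suc m) \<le> crossing_count M N a b w n"
      unfolding crossing_count_def using that by (intro crossings_mono) simp
    then show ?thesis
      unfolding first_crossing_set_def by auto
  qed
  fix m n :: nat
  assume "m \<noteq> n"
  with * show "first_crossing_set M N a b j m \<inter> first_crossing_set M N a b j n = {}"
    by (cases m n rule: linorder_cases) blast+
qed

lemma crossed_set_eq_UN_first_crossing_set:
  assumes "0 < j"
  shows "crossed_set M N a b j = (\<Union>t. first_crossing_set M N a b j t)"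
proof
  show "crossed_set M N a b j \<subseteq> (\<Union>t. first_crossing_set M N a b j t)"
  proof
    fix w assume "w \<in> crossed_set M N a b j"
    then obtain t where "j \<le> crossing_count M N a b w t"
      by (auto simp: crossed_set_def)
    then obtain s where "crossing_count M N a b w s < j" "j \<le> crossing_count M N a b w (Suc s)"
      using crossings_first_reach[OF assms] unfolding crossing_count_def by blast
    then show "w \<in> (\<Union>t. first_crossing_set M N a b j t)"
      by (auto simp: first_crossing_set_def)
  qed
qed (auto simp: crossed_set_def first_crossing_set_def)

lemma crossed_set_Suc_subset: "crossed_set M N a b (Suc j) \<subseteq> crossed_set M N a b j"
  unfolding crossed_set_def by (auto dest: Suc_leD)

lemma crossed_set_in_Ginf: "crossed_set M N a b j \<in> Ginf"
proof (cases "j = 0")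
  case True
  then show ?thesis
    by (simp add: crossed_set_def)
next
  case False
  have "range (first_crossing_set M N a b j) \<subseteq> Ginf"
    using determined_in_Ginf determined_first_crossing_set by blast
  then show ?thesis
    using False by (simp add: crossed_set_eq_UN_first_crossing_set Ginf.countable_UN)
qed

lemma first_crossing_set_Suc:
  assumes "w \<in> first_crossing_set M N a b (Suc j) t"
  shows "(even j \<longrightarrow> measure M (cyl w t) \<le> a * measure N (cyl w t)) \<and>
    (odd j \<longrightarrow> b * measure N (cyl w t) \<le> measure M (cyl w t))"
proof -
  have "crossing_count M N a b w (Suc t) \<le> crossing_count M N a b w t + 1"
    by (simp add: crossing_count_def)
  then have "crossing_count M N a b w t = j" "crossing_count M N a b w (Suc t) = Suc j"
    using assms by (auto simp: first_crossing_set_def)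
  then show ?thesis
    by (auto simp: crossing_count_def split: if_splits)
qed

lemma oscillating_in_crossed_set:
  assumes "frequently (\<lambda>t. measure M (cyl w t) \<le> a * measure N (cyl w t)) sequentially"
    and "frequently (\<lambda>t. b * measure N (cyl w t) \<le> measure M (cyl w t)) sequentially"
  shows "w \<in> crossed_set M N a b j"
  using crossings_unbounded[OF assms] by (simp add: crossed_set_def crossing_count_def)

context cylinder_measure_pair
begin

lemma measure_crossed_set_odd:
  "measure M (crossed_set M N a b (Suc (2 * i))) \<le> a * measure N (crossed_set M N a b (Suc (2 * i)))"
proof -
  interpret NM: cylinder_measure_pair N M
    by unfold_locales (simp_all add: sets_M sets_N)
  have "1 * measure M (\<Union>t. first_crossing_set M N a b (Suc (2 * i)) t)
      \<le> a * measure N (\<Union>t. first_crossing_set M N a b (Suc (2 * i)) t)"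
    using determined_first_crossing_set disjoint_family_first_crossing_set first_crossing_set_Suc
    by (intro NM.measure_le_stopped) auto
  then show ?thesis
    by (simp add: crossed_set_eq_UN_first_crossing_set)
qed

lemma measure_crossed_set_even:
  "b * measure N (crossed_set M N a b (Suc (Suc (2 * i)))) \<le> measure M (crossed_set M N a b (Suc (Suc (2 * i))))"
proof -
  have "b * measure N (\<Union>t. first_crossing_set M N a b (Suc (Suc (2 * i))) t)
      \<le> 1 * measure M (\<Union>t. first_crossing_set M N a b (Suc (Suc (2 * i))) t)"
    using determined_first_crossing_set disjoint_family_first_crossing_set first_crossing_set_Suc
    by (intro measure_le_stopped) auto
  then show ?thesis
    by (simp add: crossed_set_eq_UN_first_crossing_set)
qed

text \<open>Each upcrossing costs a factor \<open>a/b\<close> of \<open>N\<close>-measure.\<close>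

lemma measure_crossed_set_le_power:
  assumes "0 \<le> a" "a < b"
  shows "measure N (crossed_set M N a b (2 * i)) \<le> measure N UNIV * (a / b) ^ i"
proof (induction i)
  case 0
  show ?case
    using Ginf.top by (simp add: N.finite_measure_mono sets_N)
next
  case (Suc i)
  let ?S = "crossed_set M N a b"
  have "b * measure N (?S (2 * Suc i)) \<le> measure M (?S (Suc (Suc (2 * i))))"
    using measure_crossed_set_even by simp
  also have "\<dots> \<le> measure M (?S (Suc (2 * i)))"
    using crossed_set_Suc_subset crossed_set_in_Ginf by (intro M.finite_measure_mono) (auto simp: sets_M)
  also have "\<dots> \<le> a * measure N (?S (Suc (2 * i)))"
    by (rule measure_crossed_set_odd)
  also have "\<dots> \<le> a * measure N (?S (2 * i))"
    using crossed_set_Suc_subset crossed_set_in_Ginf assms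
    by (intro mult_left_mono N.finite_measure_mono) (auto simp: sets_N)
  also have "\<dots> \<le> a * (measure N UNIV * (a / b) ^ i)"
    using Suc.IH assms by (intro mult_left_mono) auto
  also have "\<dots> = b * (measure N UNIV * (a / b) ^ Suc i)"
    using assms by simp
  finally have "b * measure N (?S (2 * Suc i)) \<le> b * (measure N UNIV * (a / b) ^ Suc i)" .
  moreover have "0 < b"
    using assms by simp
  ultimately show ?case
    by (simp only: mult_le_cancel_left_pos)
qed

lemma AE_not_oscillating:
  assumes "0 \<le> a" "a < b"
  shows "AE w in N. \<not> (frequently (\<lambda>t. measure M (cyl w t) \<le> a * measure N (cyl w t)) sequentially \<and>
    frequently (\<lambda>t. b * measure N (cyl w t) \<le> measure M (cyl w t)) sequentially)"
proof (rule AE_I')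
  let ?I = "\<Inter>j. crossed_set M N a b j"
  have I: "?I \<in> sets N"
    using crossed_set_in_Ginf by (auto simp: sets_N)
  have "(\<lambda>i. measure N UNIV * (a / b) ^ i) \<longlonglongrightarrow> measure N UNIV * 0"
    using assms by (intro tendsto_mult_left LIMSEQ_realpow_zero) auto
  moreover have "measure N ?I \<le> measure N UNIV * (a / b) ^ i" for i
    using N.finite_measure_mono[OF _ crossed_set_in_Ginf[unfolded sets_N[symmetric]]]
      measure_crossed_set_le_power[OF assms] by (meson INT_lower UNIV_I order_trans)
  ultimately have "measure N ?I \<le> 0"
    by (intro LIMSEQ_le_const) auto
  then show "?I \<in> null_sets N"
    using I by (simp add: N.emeasure_eq_measure null_setsI measure_le_0_iff)
qed (use oscillating_in_crossed_set in auto)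

end

section \<open>The finite derivative\<close>

text \<open>\<open>fin_deriv M N w t\<close> is \<open>D\<^sub>t\<^sub>+\<^sub>1(w)\<close> of the finite derivative test for the pair \<open>(M, N)\<close>.\<close>

definition fin_deriv ::
    "(nat \<Rightarrow> bool) measure \<Rightarrow> (nat \<Rightarrow> bool) measure \<Rightarrow> (nat \<Rightarrow> bool) \<Rightarrow> nat \<Rightarrow> real"
  where
  "fin_deriv M N w t = share (measure M (cyl w t)) (measure N (cyl w t))"

lemma fin_deriv_swap: "fin_deriv N M w t = 1 - fin_deriv M N w t"
  unfolding fin_deriv_def by (rule share_swap) auto

definition dominated_from ::
    "(nat \<Rightarrow> bool) measure \<Rightarrow> (nat \<Rightarrow> bool) measure \<Rightarrow> real \<Rightarrow> nat \<Rightarrow> (nat \<Rightarrow> bool) set"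
  where
  "dominated_from M N c s = {w. \<forall>t\<ge>s. c * measure N (cyl w t) \<le> measure M (cyl w t)}"

lemma determined_dominated_at:
  "determined t {w. c * measure N (cyl w t) \<le> measure M (cyl w t)}"
  by (rule determined_Collect) (metis cyl_cong)

lemma dominated_from_in_Ginf: "dominated_from M N c s \<in> Ginf"
proof -
  have "dominated_from M N c s = (\<Inter>t\<in>{s..}. {w. c * measure N (cyl w t) \<le> measure M (cyl w t)})"
    by (auto simp: dominated_from_def)
  then show ?thesis
    using determined_in_Ginf[OF determined_dominated_at] by (auto intro: Ginf.countable_INT')
qed

lemma dominated_from_if_limit_above:
  assumes "fin_deriv M N w \<longlonglongrightarrow> l" "c / (1 + c) < l" "0 \<le> c"
  shows "w \<in> (\<Union>s. dominated_from M N c s)"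
proof -
  have "eventually (\<lambda>t. c / (1 + c) < fin_deriv M N w t) sequentially"
    using assms(1,2) by (rule order_tendstoD(1))
  then obtain s where "\<forall>t\<ge>s. c / (1 + c) < fin_deriv M N w t"
    by (auto simp: eventually_sequentially)
  then have "w \<in> dominated_from M N c s"
    using mult_le_if_le_share \<open>0 \<le> c\<close> by (auto simp: dominated_from_def fin_deriv_def less_imp_le)
  then show ?thesis
    by blast
qed

context cylinder_measure_pair
begin

lemma borel_measurable_fin_deriv: "(\<lambda>w. fin_deriv M N w t) \<in> borel_measurable N"
proof (rule measurableI)
  fix A :: "real set"
  have "determined t {w. fin_deriv M N w t \<in> A}"
    unfolding fin_deriv_def by (rule determined_Collect) (metis cyl_cong)
  then show "(\<lambda>w. fin_deriv M N w t) -` A \<inter> space N \<in> sets N"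
    by (simp add: vimage_def sets_N determined_in_Ginf)
qed simp

lemma limit_below_in_Ginf: "{w. \<exists>l. fin_deriv M N w \<longlonglongrightarrow> l \<and> l < e} \<in> Ginf"
proof -
  have "{w \<in> space N. Cauchy (\<lambda>t. fin_deriv M N w t)} \<in> sets N"
    using borel_measurable_fin_deriv by (rule sets_Collect_Cauchy)
  moreover have "(\<lambda>w. lim (\<lambda>t. fin_deriv M N w t)) -` {..<e} \<inter> space N \<in> sets N"
    using borel_measurable_lim_metric[OF borel_measurable_fin_deriv] by (rule measurable_sets) simp
  ultimately have "{w \<in> space N. Cauchy (\<lambda>t. fin_deriv M N w t)} \<inter>
      ((\<lambda>w. lim (\<lambda>t. fin_deriv M N w t)) -` {..<e} \<inter> space N) \<in> sets N"
    by (rule sets.Int)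
  moreover have "{w \<in> space N. Cauchy (\<lambda>t. fin_deriv M N w t)} \<inter>
      ((\<lambda>w. lim (\<lambda>t. fin_deriv M N w t)) -` {..<e} \<inter> space N)
      = {w. \<exists>l. fin_deriv M N w \<longlonglongrightarrow> l \<and> l < e}"
    by (auto simp: Cauchy_convergent_iff convergent_def limI)
  ultimately show ?thesis
    by (simp add: sets_N)
qed

lemma AE_not_oscillating_fin_deriv:
  assumes "0 < \<alpha>" "\<alpha> < \<beta>" "\<beta> < 1"
  shows "AE w in N. \<not> oscillates (fin_deriv M N w) \<alpha> \<beta>"
proof -
  define a b where "a = \<alpha> / (1 - \<alpha>)" and "b = \<beta> / (1 - \<beta>)"
  have "0 \<le> a" "a < b" "a / (1 + a) = \<alpha>" "0 \<le> b" "b / (1 + b) = \<beta>"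
    using assms by (auto simp: a_def b_def divide_simps algebra_simps)
  have low: "measure M (cyl w t) \<le> a * measure N (cyl w t)" if "fin_deriv M N w t \<le> \<alpha>" for w t
    using le_mult_if_share_le \<open>0 \<le> a\<close> \<open>a / (1 + a) = \<alpha>\<close> that by (simp add: fin_deriv_def)
  have high: "b * measure N (cyl w t) \<le> measure M (cyl w t)" if "\<beta> \<le> fin_deriv M N w t" for w t
    using mult_le_if_le_share \<open>0 \<le> b\<close> \<open>b / (1 + b) = \<beta>\<close> that by (simp add: fin_deriv_def)
  show ?thesis
    using AE_not_oscillating[OF \<open>0 \<le> a\<close> \<open>a < b\<close>]
  proof (rule eventually_mono)
    fix w
    assume "\<not> (frequently (\<lambda>t. measure M (cyl w t) \<le> a * measure N (cyl w t)) sequentially \<and>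
      frequently (\<lambda>t. b * measure N (cyl w t) \<le> measure M (cyl w t)) sequentially)"
    then show "\<not> oscillates (fin_deriv M N w) \<alpha> \<beta>"
      unfolding oscillates_def using frequently_elim1 low high by meson
  qed
qed

lemma AE_convergent_fin_deriv: "AE w in N. convergent (fin_deriv M N w)"
proof -
  have "AE w in N. 0 < real_of_rat r \<and> real_of_rat r < real_of_rat s \<and> real_of_rat s < 1 \<longrightarrow>
      \<not> oscillates (fin_deriv M N w) (real_of_rat r) (real_of_rat s)" for r s
  proof (cases "0 < real_of_rat r \<and> real_of_rat r < real_of_rat s \<and> real_of_rat s < 1")
    case True
    then have "AE w in N. \<not> oscillates (fin_deriv M N w) (real_of_rat r) (real_of_rat s)"
      by (intro AE_not_oscillating_fin_deriv) auto
    then show ?thesis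
      by (rule eventually_mono) simp
  qed (intro AE_I2, blast)
  then have "AE w in N. \<forall>r s. 0 < real_of_rat r \<and> real_of_rat r < real_of_rat s \<and> real_of_rat s < 1 \<longrightarrow>
      \<not> oscillates (fin_deriv M N w) (real_of_rat r) (real_of_rat s)"
    by (simp add: AE_all_countable)
  then show ?thesis
  proof (rule eventually_mono)
    fix w
    assume no_osc: "\<forall>r s. 0 < real_of_rat r \<and> real_of_rat r < real_of_rat s \<and> real_of_rat s < 1 \<longrightarrow>
      \<not> oscillates (fin_deriv M N w) (real_of_rat r) (real_of_rat s)"
    show "convergent (fin_deriv M N w)"
    proof (rule convergent_if_not_oscillating)
      show "0 \<le> fin_deriv M N w t" "fin_deriv M N w t \<le> 1" for t
        by (simp_all add: fin_deriv_def share_nonneg share_le_one)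
      fix \<alpha> \<beta> :: real
      assume "\<alpha> \<in> \<rat>" "\<beta> \<in> \<rat>" "0 < \<alpha>" "\<alpha> < \<beta>" "\<beta> < 1"
      then show "\<not> oscillates (fin_deriv M N w) \<alpha> \<beta>"
        using no_osc by (auto elim!: Rats_cases)
    qed
  qed
qed

lemma measure_dominated_from_determined_le:
  assumes E: "determined m E" and "0 \<le> c"
  shows "c * measure N (E \<inter> dominated_from M N c s) \<le> measure M E"
proof -
  let ?F = "{w. c * measure N (cyl w (s + m)) \<le> measure M (cyl w (s + m))}"
  have EF: "determined (s + m) (E \<inter> ?F)"
    using determined_Int[OF determined_mono[OF E] determined_dominated_at] by simp
  have "c * measure N (E \<inter> dominated_from M N c s) \<le> c * measure N (E \<inter> ?F)"
    using determined_in_Ginf[OF EF] \<open>0 \<le> c\<close>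
    by (intro mult_left_mono N.finite_measure_mono) (auto simp: dominated_from_def sets_N)
  also have "\<dots> \<le> 1 * measure M (E \<inter> ?F)"
    using EF by (rule measure_le_determined) auto
  also have "\<dots> \<le> measure M E"
    using determined_in_Ginf[OF E] by (auto intro: M.finite_measure_mono simp: sets_M)
  finally show ?thesis .
qed

lemma measure_dominated_from_le:
  assumes A: "A \<in> Ginf" and "0 \<le> c"
  shows "c * measure N (A \<inter> dominated_from M N c s) \<le> measure M A"
proof (rule field_le_epsilon)
  fix e :: real
  assume "0 < e"
  define \<epsilon> where "\<epsilon> = e / (1 + c)"
  have "0 < \<epsilon>" "(1 + c) * \<epsilon> = e"
    using \<open>0 < e\<close> \<open>0 \<le> c\<close> by (auto simp: \<epsilon>_def)
  obtain t E where E: "determined t E" and "measure M (sym_diff A E) < \<epsilon>" "measure N (sym_diff A E) < \<epsilon>"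
    using approx_by_determined[OF A \<open>0 < \<epsilon>\<close>] .
  let ?D = "dominated_from M N c s"
  have sets: "E \<in> sets N" "A \<in> sets N" "?D \<in> sets N"
    using determined_in_Ginf[OF E] dominated_from_in_Ginf A by (auto simp: sets_N)
  have "measure N (A \<inter> ?D) \<le> measure N (E \<inter> ?D) + measure N (sym_diff (A \<inter> ?D) (E \<inter> ?D))"
    using sets by (intro N.measure_le_sym_diff) auto
  also have "measure N (sym_diff (A \<inter> ?D) (E \<inter> ?D)) \<le> measure N (sym_diff A E)"
    using sets by (intro N.finite_measure_mono) auto
  finally have "measure N (A \<inter> ?D) \<le> measure N (E \<inter> ?D) + \<epsilon>"
    using \<open>measure N (sym_diff A E) < \<epsilon>\<close> by simp
  then have "c * measure N (A \<inter> ?D) \<le> c * measure N (E \<inter> ?D) + c * \<epsilon>"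
    using \<open>0 \<le> c\<close> by (metis distrib_left mult_left_mono)
  also have "\<dots> \<le> measure M E + c * \<epsilon>"
    using measure_dominated_from_determined_le[OF E \<open>0 \<le> c\<close>] by simp
  also have "\<dots> \<le> measure M A + \<epsilon> + c * \<epsilon>"
    using M.measure_le_sym_diff[of E A] \<open>measure M (sym_diff A E) < \<epsilon>\<close> sets
    by (auto simp: sets_M sets_N Un_commute)
  finally show "c * measure N (A \<inter> ?D) \<le> measure M A + e"
    using \<open>(1 + c) * \<epsilon> = e\<close> by (simp add: algebra_simps)
qed

lemma measure_eventually_dominated_le:
  assumes A: "A \<in> Ginf" and "0 \<le> c"
  shows "c * measure N (A \<inter> (\<Union>s. dominated_from M N c s)) \<le> measure M A"
proof -
  have "incseq (\<lambda>s. A \<inter> dominated_from M N c s)"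
    by (auto simp: incseq_def dominated_from_def)
  then have "(\<lambda>s. measure N (A \<inter> dominated_from M N c s)) \<longlonglongrightarrow> measure N (\<Union>s. A \<inter> dominated_from M N c s)"
    using A dominated_from_in_Ginf by (intro N.finite_Lim_measure_incseq) (auto simp: sets_N)
  then have "(\<lambda>s. c * measure N (A \<inter> dominated_from M N c s)) \<longlonglongrightarrow> c * measure N (A \<inter> (\<Union>s. dominated_from M N c s))"
    by (simp add: tendsto_mult_left)
  then show ?thesis
    using measure_dominated_from_le[OF assms] by (intro LIMSEQ_le_const2) auto
qed

lemma measure_limit_below_pos:
  assumes A: "A \<in> Ginf" and e: "0 < e" "e < 1"
    and pos: "0 < measure N A" and less: "measure M A < e / (1 - e) * measure N A"
  shows "0 < measure N (A \<inter> {w. \<exists>l. fin_deriv M N w \<longlonglongrightarrow> l \<and> l < e})"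
proof (rule ccontr)
  let ?R = "{w. \<exists>l. fin_deriv M N w \<longlonglongrightarrow> l \<and> l < e}"
  assume "\<not> 0 < measure N (A \<inter> ?R)"
  moreover have "A \<inter> ?R \<in> sets N"
    using Ginf.Int[OF A limit_below_in_Ginf] by (simp add: sets_N)
  ultimately have "A \<inter> ?R \<in> null_sets N"
    by (simp add: N.emeasure_eq_measure null_setsI zero_less_measure_iff)
  define q where "q = e / (1 - e)"
  define r where "r = measure M A / measure N A"
  have "0 \<le> r" "r < q" "measure M A = r * measure N A"
    using pos less by (simp_all add: q_def r_def pos_divide_less_eq)
  define c where "c = (r + q) / 2"
  have "0 \<le> c" "r < c" "c < q"
    using \<open>0 \<le> r\<close> \<open>r < q\<close> by (simp_all add: c_def)
  have "measure M A < c * measure N A"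
    using \<open>measure M A = r * measure N A\<close> \<open>r < c\<close> pos by simp
  have "c / (1 + c) < e"
    using \<open>c < q\<close> \<open>0 \<le> c\<close> e by (simp add: q_def field_simps)
  have "AE w in N. w \<in> A \<longrightarrow> w \<in> A \<inter> (\<Union>s. dominated_from M N c s)"
    using AE_convergent_fin_deriv AE_not_in[OF \<open>A \<inter> ?R \<in> null_sets N\<close>]
  proof eventually_elim
    case (elim w)
    then show ?case
      using dominated_from_if_limit_above[OF _ _ \<open>0 \<le> c\<close>] \<open>c / (1 + c) < e\<close>
      by (fastforce simp: convergent_def not_less)
  qed
  moreover have "(\<Union>s. dominated_from M N c s) \<in> Ginf"
    using dominated_from_in_Ginf by (intro Ginf.countable_UN) blast
  ultimately have "measure N A \<le> measure N (A \<inter> (\<Union>s. dominated_from M N c s))"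
    using A by (intro N.finite_measure_mono_AE) (auto simp: sets_N)
  then have "c * measure N A \<le> measure M A"
    using measure_eventually_dominated_le[OF A \<open>0 \<le> c\<close>] \<open>0 \<le> c\<close>
    by (meson mult_left_mono order_trans)
  then show False
    using \<open>measure M A < c * measure N A\<close> by simp
qed

end

section \<open>The finite derivative test\<close>

lemma length_play [simp]: "length (play w f g t) = t"
  by (induction t) auto

lemma nth_play: "n < t \<Longrightarrow> play w f g t ! n = (w n, f (play w f g n), g (play w f g n))"
  by (induction t) (auto simp: nth_append less_Suc_eq)

lemma fdt_play_Suc:
  "fdt (Suc t) (play w f g (Suc t)) =
    share (\<Prod>n<t. pmf (f (play w f g n)) (w n)) (\<Prod>n<t. pmf (g (play w f g n)) (w n))"
proof -
  have "(\<Prod>n<t. pmf (fst (snd (play w f g (Suc t) ! n))) (fst (play w f g (Suc t) ! n)))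
      = (\<Prod>n<t. pmf (f (play w f g n)) (w n))"
    "(\<Prod>n<t. pmf (snd (snd (play w f g (Suc t) ! n))) (fst (play w f g (Suc t) ! n)))
      = (\<Prod>n<t. pmf (g (play w f g n)) (w n))"
    by (auto intro!: prod.cong simp: nth_play simp del: play.simps)
  then show ?thesis
    by (simp add: fdt_def share_def Let_def del: play.simps)
qed

lemma induced_cylinder_measure_pair:
  assumes "induced M f g sel" "induced N f g sel'"
  shows "cylinder_measure_pair M N"
proof -
  have "prob_space M" "prob_space N" "sets M = Ginf" "sets N = Ginf"
    using assms unfolding induced_def by blast+
  then show ?thesis
    unfolding cylinder_measure_pair_def cylinder_measure_pair_axioms_def prob_space_def by blast
qed

lemma fdt_tendsto_iff_fin_deriv:
  assumes "induced Mf f g f" "induced Mg f g g"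
  shows "(\<lambda>t. fdt t (play w f g t)) \<longlonglongrightarrow> l \<longleftrightarrow> fin_deriv Mf Mg w \<longlonglongrightarrow> l"
proof -
  have "fdt (Suc t) (play w f g (Suc t)) = fin_deriv Mf Mg w t" for t
    using assms fdt_play_Suc[of t w f g] by (simp add: fin_deriv_def induced_def del: play.simps)
  then show ?thesis
    using filterlim_sequentially_Suc[of "\<lambda>t. fdt t (play w f g t)" "nhds l"] by simp
qed

lemma Rset_fdt:
  assumes "induced Mf f g f" "induced Mg f g g"
  shows "Rset fdt f g e = {w. \<exists>l. fin_deriv Mf Mg w \<longlonglongrightarrow> l \<and> l < e}"
  using fdt_tendsto_iff_fin_deriv[OF assms] by (auto simp: Rset_def)

lemma Lset_fdt:
  assumes "induced Mf f g f" "induced Mg f g g"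
  shows "Lset fdt f g e = {w. \<exists>l. fin_deriv Mg Mf w \<longlonglongrightarrow> l \<and> l < 1 - e}"
proof -
  have "(\<exists>l. X \<longlonglongrightarrow> l \<and> e < l) \<longleftrightarrow> (\<exists>l. (\<lambda>t. 1 - X t) \<longlonglongrightarrow> l \<and> l < 1 - e)" for X :: "nat \<Rightarrow> real"
  proof
    assume "\<exists>l. X \<longlonglongrightarrow> l \<and> e < l"
    then obtain l where "X \<longlonglongrightarrow> l" "e < l"
      by blast
    then have "(\<lambda>t. 1 - X t) \<longlonglongrightarrow> 1 - l"
      by (intro tendsto_diff tendsto_const)
    then show "\<exists>l. (\<lambda>t. 1 - X t) \<longlonglongrightarrow> l \<and> l < 1 - e"
      using \<open>e < l\<close> by auto
  next
    assume "\<exists>l. (\<lambda>t. 1 - X t) \<longlonglongrightarrow> l \<and> l < 1 - e"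
    then obtain l where "(\<lambda>t. 1 - (1 - X t)) \<longlonglongrightarrow> 1 - l" "l < 1 - e"
      using tendsto_diff[OF tendsto_const] by blast
    then show "\<exists>l. X \<longlonglongrightarrow> l \<and> e < l"
      by (auto intro!: exI)
  qed
  then show ?thesis
    using fdt_tendsto_iff_fin_deriv[OF assms] by (simp add: Lset_def fin_deriv_swap[of Mf Mg])
qed

theorem proposition3:
  shows "reasonable fdt"
  unfolding reasonable_def
proof (intro allI impI ballI conjI)
  fix f g :: strat and Mf Mg :: "(nat \<Rightarrow> bool) measure" and A and e :: real
  assume "induced Mf f g f \<and> induced Mg f g g" and A: "A \<in> Ginf"
  then have ind: "induced Mf f g f" "induced Mg f g g"
    by blast+
  interpret fg: cylinder_measure_pair Mf Mg
    using ind by (rule induced_cylinder_measure_pair)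
  interpret gf: cylinder_measure_pair Mg Mf
    using ind by (intro induced_cylinder_measure_pair)
  show "0 < measure Mg (A \<inter> Rset fdt f g e)"
    if "0 < e \<and> e < 1/2 \<and> 0 < measure Mg A \<and> measure Mf A < e / (1 - e) * measure Mg A"
    using that fg.measure_limit_below_pos[OF A] by (simp add: Rset_fdt[OF ind])
  show "0 < measure Mf (A \<inter> Lset fdt f g e)"
    if "1/2 < e \<and> e < 1 \<and> 0 < measure Mf A \<and> measure Mg A < (1 - e) / e * measure Mf A"
    using that gf.measure_limit_below_pos[OF A, of "1 - e"] by (simp add: Lset_fdt[OF ind])
qed

end
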